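(* Let $X$ be a finite dimensional real or complex Banach space, $K\subseteq B_X$ a Borel set, and $\mu$ an admissible probability measure on $K$. Then there is a point $\psi_0\in S_{X^*}$, depending on $\mu$, such that for every $n\in\mathbb N$ $$\mathbf c_n(X)\le \exp\left\{-n\int_K\log|\langle x,\psi_0\rangle|\,d\mu(x)\right\}.$$
   Context: For a Banach space $Y$, $B_Y$ and $S_Y$ denote its closed unit ball and unit sphere. For a Banach space $X$ over $\mathbb K\in\{\mathbb R,\mathbb C\}$ and $n\in\mathbb N$, $\mathbf c_n(X)$ is the smallest constant such that for all $\psi_1,\dots,\psi_n\in X^*$, $\|\psi_1\|\cdots\|\psi_n\|\le \mathbf c_n(X)\,\|\psi_1\cdots\psi_n\|$, where $\psi_1\cdots\psi_n$ is the pointwise product and $\|P\|=\sup_{x\in S_X}|P(x)|$. Admissibility: a Borel measure $\mu$ on a Borel set $K\subseteq B_X$ is admissible if $\int_K\log|\langle x,\psi\rangle|\,d\mu(x)$ is finite for every $\psi\in S_{X^*}$ and the functions $g_m(\psi)=\int_K\max\{\log|\langle x,\psi\rangle|,-m\}\,d\mu(x)$ converge uniformly on $S_{X^*}$, as $m\to\infty$, to $g(\psi)=\int_K\log|\langle x,\psi\rangle|\,d\mu(x)$. *)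

theory Defs
  imports "HOL-Analysis.Analysis" "HOL-Probability.Probability"
begin

text \<open>A finite dimensional Banach space over the scalar field 'k (real or complex)
  is modelled, up to linear isomorphism, as the coordinate space 'k^'n equipped with
  an arbitrary norm N.\<close>

definition is_norm_on :: "('k::real_normed_field ^ 'n::finite \<Rightarrow> real) \<Rightarrow> bool" where
  "is_norm_on N \<longleftrightarrow>
     (\<forall>x. N x = 0 \<longleftrightarrow> x = 0) \<and>
     (\<forall>(c::'k) x. N (c *s x) = norm c * N x) \<and>
     (\<forall>x y. N (x + y) \<le> N x + N y)"

definition klinear_fun :: "('k::real_normed_field ^ 'n::finite \<Rightarrow> 'k) \<Rightarrow> bool" where
  "klinear_fun \<psi> \<longleftrightarrow>
     (\<forall>x y. \<psi> (x + y) = \<psi> x + \<psi> y) \<and> (\<forall>(c::'k) x. \<psi> (c *s x) = c * \<psi> x)"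

definition sphere_sup :: "('k::real_normed_field ^ 'n::finite \<Rightarrow> real) \<Rightarrow> ('k ^ 'n \<Rightarrow> 'k) \<Rightarrow> real" where
  "sphere_sup N P = (SUP x\<in>{x. N x = 1}. norm (P x))"

definition c_const :: "('k::real_normed_field ^ 'n::finite \<Rightarrow> real) \<Rightarrow> nat \<Rightarrow> real" where
  "c_const N n = Inf {c. \<forall>\<psi> :: nat \<Rightarrow> ('k ^ 'n \<Rightarrow> 'k).
       (\<forall>i<n. klinear_fun (\<psi> i)) \<longrightarrow>
       (\<Prod>i<n. sphere_sup N (\<psi> i)) \<le> c * sphere_sup N (\<lambda>x. \<Prod>i<n. \<psi> i x)}"

text \<open>max(log t, -m), with the convention log 0 = -infinity.\<close>
definition trunc_log :: "nat \<Rightarrow> real \<Rightarrow> real" where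
  "trunc_log m t = (if t = 0 then - real m else max (ln t) (- real m))"

text \<open>Admissibility of a measure mu on K (with respect to the norm N).
  "The integral of log|<x,psi>| is finite" is read as: psi x \<noteq> 0 almost everywhere
  and ln |psi x| is integrable.\<close>
definition admissible :: "('k::real_normed_field ^ 'n::finite \<Rightarrow> real) \<Rightarrow> ('k ^ 'n) measure \<Rightarrow> bool" where
  "admissible N \<mu> \<longleftrightarrow>
     (\<forall>\<psi>. klinear_fun \<psi> \<and> sphere_sup N \<psi> = 1 \<longrightarrow>
          (AE x in \<mu>. \<psi> x \<noteq> 0) \<and> integrable \<mu> (\<lambda>x. ln (norm (\<psi> x)))) \<and>
     (\<forall>\<epsilon>>0. \<exists>M. \<forall>m\<ge>M. \<forall>\<psi>. klinear_fun \<psi> \<and> sphere_sup N \<psi> = 1 \<longrightarrow>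
          \<bar>(\<integral>x. trunc_log m (norm (\<psi> x)) \<partial>\<mu>) - (\<integral>x. ln (norm (\<psi> x)) \<partial>\<mu>)\<bar> < \<epsilon>)"

end

theory Submission
  imports Defs
begin

text \<open>Minimise g(psi) = integral of log |psi| d mu over the dual unit sphere. A minimiser
  psi_0 exists: the dual sphere is compact and g is lower semicontinuous, since admissibility
  makes g a uniform limit of the truncated integrals, which are continuous by dominated
  convergence. Given functionals psi_1, ..., psi_n of norm one, minimality gives
  n g(psi_0) <= sum_i g(psi_i) = integral of log |psi_1 ... psi_n| d mu <= log ||psi_1 ... psi_n||,
  because mu lives on the unit ball, where |psi_1 ... psi_n (x)| <= ||psi_1 ... psi_n|| N(x)^n.
  Exponentiating and rescaling arbitrary functionals to norm one bounds c_n(X).\<close>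

lemma compact_lower_semicontinuous_attains_min:
  fixes f :: "'a::topological_space \<Rightarrow> real"
  assumes "compact S" "S \<noteq> {}" and sublevel_closed: "\<And>t. closed {x\<in>S. f x \<le> t}"
  shows "\<exists>y\<in>S. \<forall>z\<in>S. f y \<le> f z"
proof -
  have "S \<inter> (\<Inter>z\<in>S. {x\<in>S. f x \<le> f z}) \<noteq> {}"
  proof (rule compact_imp_fip_image[OF \<open>compact S\<close> sublevel_closed])
    fix Z assume "finite Z" "Z \<subseteq> S"
    show "S \<inter> (\<Inter>z\<in>Z. {x\<in>S. f x \<le> f z}) \<noteq> {}"
    proof (cases "Z = {}")
      case False
      with \<open>finite Z\<close> obtain z0 where "z0 \<in> Z" "\<And>z. z \<in> Z \<Longrightarrow> f z0 \<le> f z"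
        by (metis arg_min_if_finite(1,2) not_le)
      with \<open>Z \<subseteq> S\<close> show ?thesis by blast
    qed (use \<open>S \<noteq> {}\<close> in auto)
  qed
  then show ?thesis by blast
qed

section \<open>Linear functionals on coordinate spaces\<close>

lemma scaleR_eq_of_real_smult: "r *\<^sub>R (x::'k::real_normed_field^'n) = (of_real r::'k) *s x"
  by (simp add: vec_eq_iff of_real_def)

definition lin_functional :: "'k::real_normed_field ^ 'n::finite \<Rightarrow> 'k ^ 'n \<Rightarrow> 'k" where
  "lin_functional a x = (\<Sum>i\<in>UNIV. x$i * a$i)"

definition dual_sphere :: "('k::real_normed_field ^ 'n::finite \<Rightarrow> real) \<Rightarrow> ('k ^ 'n \<Rightarrow> 'k) set" where
  "dual_sphere N = {\<psi>. klinear_fun \<psi> \<and> sphere_sup N \<psi> = 1}"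

lemma klinear_fun_0: "klinear_fun \<psi> \<Longrightarrow> \<psi> 0 = 0"
  unfolding klinear_fun_def by (metis add_cancel_left_left add_0)

lemma klinear_fun_sum: "klinear_fun \<psi> \<Longrightarrow> \<psi> (sum f A) = (\<Sum>i\<in>A. \<psi> (f i))"
  by (induction A rule: infinite_finite_induct) (simp_all add: klinear_fun_0 klinear_fun_def)

lemma klinear_fun_scaleR: "klinear_fun \<psi> \<Longrightarrow> \<psi> (r *\<^sub>R x) = of_real r * \<psi> x"
  by (simp add: scaleR_eq_of_real_smult klinear_fun_def)

lemma klinear_fun_divide: "klinear_fun \<psi> \<Longrightarrow> klinear_fun (\<lambda>x. \<psi> x / c)"
  unfolding klinear_fun_def by (simp add: add_divide_distrib)

lemma klinear_fun_lin_functional: "klinear_fun (lin_functional a)"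
  unfolding klinear_fun_def lin_functional_def
  by (simp add: distrib_right sum.distrib sum_distrib_left mult.assoc)

lemma klinear_fun_eq_lin_functional:
  assumes "klinear_fun \<psi>" shows "\<psi> = lin_functional (\<chi> i. \<psi> (axis i 1))"
proof
  fix x
  have "\<psi> x = \<psi> (\<Sum>i\<in>UNIV. x$i *s axis i 1)" by (simp add: basis_expansion)
  also have "\<dots> = (\<Sum>i\<in>UNIV. x$i * \<psi> (axis i 1))"
    using assms by (simp add: klinear_fun_sum klinear_fun_def)
  finally show "\<psi> x = lin_functional (\<chi> i. \<psi> (axis i 1)) x" by (simp add: lin_functional_def)
qed

lemma lin_functional_axis: "lin_functional a (axis i 1) = a $ i"
proof -
  have "lin_functional a (axis i 1) = (\<Sum>j\<in>UNIV. if j = i then a $ j else 0)"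
    unfolding lin_functional_def by (intro sum.cong) (simp_all add: axis_def)
  then show ?thesis by simp
qed

lemma tendsto_lin_functional: "(a \<longlongrightarrow> b) F \<Longrightarrow> ((\<lambda>k. lin_functional (a k) x) \<longlongrightarrow> lin_functional b x) F"
  unfolding lin_functional_def by (intro tendsto_intros)

lemma borel_measurable_klinear_fun:
  fixes \<psi> :: "'k::{real_normed_field,second_countable_topology} ^ 'n::finite \<Rightarrow> 'k"
  assumes "klinear_fun \<psi>" shows "\<psi> \<in> borel_measurable borel"
proof -
  have "continuous_on UNIV (lin_functional a)" for a :: "'k^'n"
    unfolding lin_functional_def by (intro continuous_intros)
  then show ?thesis
    by (subst klinear_fun_eq_lin_functional[OF assms]) (rule borel_measurable_continuous_onI)
qed

section \<open>Norms and the dual unit sphere\<close>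

locale vec_norm =
  fixes N :: "'k::{real_normed_field,heine_borel,second_countable_topology} ^ 'n::finite \<Rightarrow> real"
  assumes is_norm: "is_norm_on N"
begin

lemma N_eq_0_iff: "N x = 0 \<longleftrightarrow> x = 0"
  using is_norm by (simp add: is_norm_on_def)

lemma N_smult: "N (c *s x) = norm c * N x"
  using is_norm by (simp add: is_norm_on_def)

lemma N_triangle: "N (x + y) \<le> N x + N y"
  using is_norm by (simp add: is_norm_on_def)

lemma N_0 [simp]: "N 0 = 0"
  by (simp add: N_eq_0_iff)

lemma N_scaleR: "N (r *\<^sub>R x) = \<bar>r\<bar> * N x"
  by (simp add: scaleR_eq_of_real_smult N_smult)

lemma N_uminus: "N (- x) = N x"
  using N_scaleR[of "-1" x] by simp

lemma N_nonneg: "N x \<ge> 0"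
  using N_triangle[of x "- x"] by (simp add: N_uminus)

lemma N_pos: "x \<noteq> 0 \<Longrightarrow> N x > 0"
  using N_eq_0_iff N_nonneg by (metis less_eq_real_def)

lemma N_normalize: "x \<noteq> 0 \<Longrightarrow> N ((1 / N x) *\<^sub>R x) = 1"
  using N_pos[of x] by (simp add: N_scaleR)

lemma N_sum: "N (sum f A) \<le> (\<Sum>i\<in>A. N (f i))"
  by (induction A rule: infinite_finite_induct)
    (simp_all add: order_trans[OF N_triangle])

lemma N_le_const_norm: "\<exists>C. \<forall>x. N x \<le> C * norm x"
proof -
  have "N x \<le> (\<Sum>i\<in>UNIV. N (axis i 1)) * norm x" for x
  proof -
    have "N x = N (\<Sum>i\<in>UNIV. x$i *s axis i 1)" by (simp add: basis_expansion)
    also have "\<dots> \<le> (\<Sum>i\<in>UNIV. norm (x$i) * N (axis i 1))" by (simp add: order_trans[OF N_sum] N_smult)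
    also have "\<dots> \<le> (\<Sum>i\<in>UNIV. norm x * N (axis i 1))"
      by (intro sum_mono mult_right_mono) (simp_all add: N_nonneg Finite_Cartesian_Product.norm_nth_le)
    finally show ?thesis by (simp add: sum_distrib_left mult.commute)
  qed
  then show ?thesis by blast
qed

lemma continuous_on_N: "continuous_on UNIV N"
proof -
  obtain C where C: "\<And>x. N x \<le> C * norm x" using N_le_const_norm by blast
  have C_abs: "N x \<le> \<bar>C\<bar> * norm x" for x
    using C[of x] by (smt (verit) mult_right_mono norm_ge_zero)
  have "dist (N x) (N y) \<le> \<bar>C\<bar> * dist x y" for x y
  proof -
    have "N x \<le> N (x - y) + N y" "N y \<le> N (y - x) + N x"
      using N_triangle[of "x - y" y] N_triangle[of "y - x" x] by simp_all
    moreover have "N (x - y) \<le> \<bar>C\<bar> * dist x y" "N (y - x) \<le> \<bar>C\<bar> * dist x y"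
      using C_abs[of "x - y"] C_abs[of "y - x"] by (simp_all add: dist_norm norm_minus_commute)
    ultimately show ?thesis by (simp add: dist_real_def abs_le_iff)
  qed
  then show ?thesis by (intro lipschitz_on_continuous_on[of "\<bar>C\<bar>"] lipschitz_onI) simp_all
qed

lemma norm_le_const_N: "\<exists>C. \<forall>x. norm x \<le> C * N x"
proof -
  have "\<exists>u\<in>sphere 0 1. \<forall>y\<in>sphere 0 1. N u \<le> N y"
    by (rule continuous_attains_inf) (auto intro: continuous_on_subset[OF continuous_on_N])
  then obtain u where u: "u \<in> sphere 0 1" and u_min: "\<And>y. y \<in> sphere 0 1 \<Longrightarrow> N u \<le> N y"
    by blast
  have "N u > 0" using u by (intro N_pos) auto
  have "N u * norm x \<le> N x" for x
  proof (cases "x = 0")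
    case False
    then have "N u \<le> N ((1 / norm x) *\<^sub>R x)" by (intro u_min) simp
    then show ?thesis using False by (simp add: N_scaleR field_simps)
  qed simp
  with \<open>N u > 0\<close> have "norm x \<le> 1 / N u * N x" for x by (simp add: field_simps)
  then show ?thesis by blast
qed

lemma N_sphere_nonempty: "{x. N x = 1} \<noteq> {}"
  using N_normalize[of "axis undefined (1::'k)"] by (auto simp: axis_eq_0_iff)

lemma lin_functional_diff_le:
  "\<exists>C. \<forall>a b x. norm (lin_functional a x - lin_functional b x) \<le> C * (\<Sum>i\<in>UNIV. norm (a$i - b$i)) * N x"
proof -
  obtain C where C: "\<And>x. norm x \<le> C * N x" using norm_le_const_N by blast
  have "norm (lin_functional a x - lin_functional b x) \<le> C * (\<Sum>i\<in>UNIV. norm (a$i - b$i)) * N x"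
    for a b x
  proof -
    have "norm (lin_functional a x - lin_functional b x) = norm (\<Sum>i\<in>UNIV. x$i * (a$i - b$i))"
      by (simp add: lin_functional_def sum_subtractf right_diff_distrib)
    also have "\<dots> \<le> (\<Sum>i\<in>UNIV. norm (x$i) * norm (a$i - b$i))"
      by (rule order_trans[OF norm_sum]) (simp add: norm_mult)
    also have "\<dots> \<le> (\<Sum>i\<in>UNIV. C * N x * norm (a$i - b$i))"
      by (intro sum_mono mult_right_mono order_trans[OF Finite_Cartesian_Product.norm_nth_le C]) simp
    finally show ?thesis by (simp add: sum_distrib_left mult_ac)
  qed
  then show ?thesis by blast
qed

definition sphere_bounded :: "('k^'n \<Rightarrow> 'k) \<Rightarrow> bool" where
  "sphere_bounded P \<longleftrightarrow> bdd_above ((\<lambda>x. norm (P x)) ` {x. N x = 1})"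

lemma sphere_sup_upper: "sphere_bounded P \<Longrightarrow> N u = 1 \<Longrightarrow> norm (P u) \<le> sphere_sup N P"
  unfolding sphere_bounded_def sphere_sup_def by (rule cSUP_upper) auto

lemma sphere_sup_least: "(\<And>u. N u = 1 \<Longrightarrow> norm (P u) \<le> M) \<Longrightarrow> sphere_sup N P \<le> M"
  unfolding sphere_sup_def by (rule cSUP_least[OF N_sphere_nonempty]) auto

lemma sphere_sup_nonneg: "sphere_bounded P \<Longrightarrow> 0 \<le> sphere_sup N P"
  using N_sphere_nonempty sphere_sup_upper by (fastforce intro: order_trans[OF norm_ge_zero])

lemma sphere_sup_diff_le:
  assumes "sphere_bounded P" "sphere_bounded Q" and "\<And>u. N u = 1 \<Longrightarrow> norm (P u - Q u) \<le> d"
  shows "\<bar>sphere_sup N P - sphere_sup N Q\<bar> \<le> d"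
proof -
  have "sphere_sup N P \<le> sphere_sup N Q + d"
    using assms norm_triangle_ineq2[of "P _" "Q _"] sphere_sup_upper
    by (intro sphere_sup_least) (smt (verit))
  moreover have "sphere_sup N Q \<le> sphere_sup N P + d"
    using assms norm_triangle_ineq3[of "P _" "Q _"] sphere_sup_upper
    by (intro sphere_sup_least) (smt (verit))
  ultimately show ?thesis by linarith
qed

lemma sphere_bounded_klinear_fun: "klinear_fun \<psi> \<Longrightarrow> sphere_bounded \<psi>"
proof -
  assume "klinear_fun \<psi>"
  define a where "a = (\<chi> i. \<psi> (axis i 1))"
  have a: "\<psi> = lin_functional a"
    unfolding a_def by (rule klinear_fun_eq_lin_functional) fact
  obtain C where C: "\<And>a b x. norm (lin_functional a x - lin_functional b x) \<le> C * (\<Sum>i\<in>UNIV. norm (a$i - b$i)) * N x"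
    using lin_functional_diff_le by blast
  have "norm (\<psi> x) \<le> C * (\<Sum>i\<in>UNIV. norm (a$i))" if "N x = 1" for x
  proof -
    have "lin_functional 0 x = 0" by (simp add: lin_functional_def)
    then show ?thesis using C[where a=a and b=0 and x=x] that by (simp add: a)
  qed
  then show ?thesis unfolding sphere_bounded_def bdd_above_def by blast
qed

lemma sphere_bounded_prod:
  assumes "\<And>i. i \<in> I \<Longrightarrow> klinear_fun (\<psi> i)"
  shows "sphere_bounded (\<lambda>x. \<Prod>i\<in>I. \<psi> i x)"
proof -
  have "norm (\<Prod>i\<in>I. \<psi> i u) \<le> (\<Prod>i\<in>I. sphere_sup N (\<psi> i))" if "N u = 1" for u
    unfolding prod_norm[symmetric]
    by (intro prod_mono conjI norm_ge_zero sphere_sup_upper sphere_bounded_klinear_fun assms that)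
  then show ?thesis unfolding sphere_bounded_def bdd_above_def by auto
qed

lemma sphere_sup_divide:
  assumes P: "sphere_bounded P" and r: "r > 0"
  shows "sphere_sup N (\<lambda>x. P x / of_real r) = sphere_sup N P / r"
proof (rule antisym)
  show "sphere_sup N (\<lambda>x. P x / of_real r) \<le> sphere_sup N P / r"
    using sphere_sup_upper[OF P] r by (intro sphere_sup_least) (simp add: norm_divide divide_right_mono)
  have "sphere_sup N P \<le> sphere_sup N (\<lambda>x. P x / of_real r) * r"
  proof (rule sphere_sup_least)
    have "sphere_bounded (\<lambda>x. P x / of_real r)"
      using P r unfolding sphere_bounded_def bdd_above_def
      by (auto simp: norm_divide) (metis divide_right_mono less_eq_real_def)
    then show "norm (P u) \<le> sphere_sup N (\<lambda>x. P x / of_real r) * r" if "N u = 1" for u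
      using sphere_sup_upper[OF _ that] r by (fastforce simp: norm_divide field_simps)
  qed
  then show "sphere_sup N P / r \<le> sphere_sup N (\<lambda>x. P x / of_real r)"
    using r by (simp add: field_simps)
qed

lemma norm_prod_klinear_le:
  assumes "finite I" and lin: "\<And>i. i \<in> I \<Longrightarrow> klinear_fun (\<psi> i)"
  shows "norm (\<Prod>i\<in>I. \<psi> i x) \<le> sphere_sup N (\<lambda>x. \<Prod>i\<in>I. \<psi> i x) * N x ^ card I"
proof (cases "x = 0")
  case True
  show ?thesis
  proof (cases "I = {}")
    case True
    then show ?thesis using N_sphere_nonempty by (simp add: sphere_sup_def)
  next
    case False
    then have "(\<Prod>i\<in>I. \<psi> i x) = 0"
      using \<open>finite I\<close> \<open>x = 0\<close> lin klinear_fun_0 by (metis ex_in_conv prod_zero_iff)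
    moreover have "card I > 0" using False \<open>finite I\<close> by (simp add: card_gt_0_iff)
    ultimately show ?thesis by (simp add: \<open>x = 0\<close> power_0_left)
  qed
next
  case False
  let ?u = "(1 / N x) *\<^sub>R x"
  have "(\<Prod>i\<in>I. \<psi> i ?u) = (\<Prod>i\<in>I. of_real (1 / N x) * \<psi> i x)"
    using lin by (intro prod.cong) (simp_all add: klinear_fun_scaleR)
  also have "\<dots> = of_real (1 / N x) ^ card I * (\<Prod>i\<in>I. \<psi> i x)"
    unfolding prod.distrib prod_constant ..
  finally have "(\<Prod>i\<in>I. \<psi> i ?u) = of_real (1 / N x) ^ card I * (\<Prod>i\<in>I. \<psi> i x)" .
  then have "norm (\<Prod>i\<in>I. \<psi> i ?u) = norm (\<Prod>i\<in>I. \<psi> i x) / N x ^ card I"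
    using N_pos[OF False] by (simp add: norm_divide norm_power power_one_over)
  then have "norm (\<Prod>i\<in>I. \<psi> i x) = N x ^ card I * norm (\<Prod>i\<in>I. \<psi> i ?u)"
    using N_pos[OF False] by simp
  also have "\<dots> \<le> N x ^ card I * sphere_sup N (\<lambda>x. \<Prod>i\<in>I. \<psi> i x)"
    using sphere_sup_upper[OF sphere_bounded_prod[of I \<psi>, OF lin] N_normalize[OF False]] N_nonneg
    by (simp add: mult_left_mono)
  finally show ?thesis by (simp add: mult.commute)
qed

lemma norm_klinear_le: "klinear_fun \<psi> \<Longrightarrow> norm (\<psi> x) \<le> sphere_sup N \<psi> * N x"
  using norm_prod_klinear_le[of "{()}" "\<lambda>_. \<psi>" x] by simp

lemma sphere_sup_pos: "klinear_fun \<psi> \<Longrightarrow> \<psi> x \<noteq> 0 \<Longrightarrow> 0 < sphere_sup N \<psi>"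
  using norm_klinear_le[of \<psi> x] N_nonneg[of x] sphere_sup_nonneg[OF sphere_bounded_klinear_fun]
  by (smt (verit) mult_nonpos_nonneg zero_less_norm_iff)

lemma divide_sphere_sup_in_dual_sphere:
  assumes "klinear_fun \<psi>" "0 < sphere_sup N \<psi>"
  shows "(\<lambda>x. \<psi> x / of_real (sphere_sup N \<psi>)) \<in> dual_sphere N"
  using assms sphere_sup_divide[OF sphere_bounded_klinear_fun]
  by (simp add: dual_sphere_def klinear_fun_divide)

lemma dual_sphere_nonempty: "dual_sphere N \<noteq> {}"
proof -
  define \<pi> :: "'k^'n \<Rightarrow> 'k" where "\<pi> x = x $ undefined" for x
  have "klinear_fun \<pi>" by (simp add: \<pi>_def klinear_fun_def)
  moreover have "\<pi> (axis undefined 1) \<noteq> 0" by (simp add: \<pi>_def)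
  ultimately show ?thesis using divide_sphere_sup_in_dual_sphere sphere_sup_pos by blast
qed

text \<open>The dual unit sphere is handled through coefficient vectors, where the
  Euclidean topology is available.\<close>

lemma compact_dual_sphere_coeffs: "compact {a. lin_functional a \<in> dual_sphere N}"
  unfolding compact_eq_bounded_closed
proof
  have "norm a \<le> (\<Sum>i\<in>UNIV. N (axis i 1))" if "lin_functional a \<in> dual_sphere N" for a
  proof -
    have "norm (a $ i) \<le> N (axis i 1)" for i
      using that norm_klinear_le[of "lin_functional a" "axis i 1"]
      by (simp add: dual_sphere_def lin_functional_axis)
    moreover have "norm a \<le> (\<Sum>i\<in>UNIV. norm (a $ i))"
      unfolding norm_vec_def by (rule L2_set_le_sum) simp
    ultimately show ?thesis by (meson order_trans sum_mono)
  qed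
  then show "bounded {a. lin_functional a \<in> dual_sphere N}" unfolding bounded_iff by blast
next
  obtain C where C: "\<And>a b x. norm (lin_functional a x - lin_functional b x) \<le> C * (\<Sum>i\<in>UNIV. norm (a$i - b$i)) * N x"
    using lin_functional_diff_le by blast
  show "closed {a. lin_functional a \<in> dual_sphere N}"
    unfolding closed_sequential_limits
  proof (intro allI impI, elim conjE)
    fix a l assume a: "\<forall>k. a k \<in> {a. lin_functional a \<in> dual_sphere N}" and lim: "a \<longlonglongrightarrow> l"
    have "\<bar>sphere_sup N (lin_functional l) - 1\<bar> \<le> C * (\<Sum>i\<in>UNIV. norm (l$i - a k$i))" for k
    proof -
      have "\<bar>sphere_sup N (lin_functional l) - sphere_sup N (lin_functional (a k))\<bar>
          \<le> C * (\<Sum>i\<in>UNIV. norm (l$i - a k$i))"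
        using C[where a=l and b="a k"]
        by (intro sphere_sup_diff_le sphere_bounded_klinear_fun klinear_fun_lin_functional)
          (metis mult.right_neutral)
      then show ?thesis using a by (simp add: dual_sphere_def)
    qed
    moreover have "(\<lambda>k. C * (\<Sum>i\<in>UNIV. norm (l$i - a k$i))) \<longlonglongrightarrow> C * (\<Sum>i\<in>UNIV. norm (l$i - l$i))"
      using lim by (intro tendsto_intros)
    ultimately have "\<bar>sphere_sup N (lin_functional l) - 1\<bar> \<le> 0"
      by (intro LIMSEQ_le_const) auto
    then show "l \<in> {a. lin_functional a \<in> dual_sphere N}"
      by (simp add: dual_sphere_def klinear_fun_lin_functional)
  qed
qed

lemma c_const_le:
  assumes "\<And>\<psi>. \<forall>i<n. klinear_fun (\<psi> i) \<Longrightarrow>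
      (\<Prod>i<n. sphere_sup N (\<psi> i)) \<le> c * sphere_sup N (\<lambda>x. \<Prod>i<n. \<psi> i x)"
  shows "c_const N n \<le> c"
  unfolding c_const_def
proof (rule cInf_lower)
  show "c \<in> {c. \<forall>\<psi>. (\<forall>i<n. klinear_fun (\<psi> i)) \<longrightarrow>
        (\<Prod>i<n. sphere_sup N (\<psi> i)) \<le> c * sphere_sup N (\<lambda>x. \<Prod>i<n. \<psi> i x)}"
    using assms by blast
  obtain \<phi> where \<phi>: "\<phi> \<in> dual_sphere N" using dual_sphere_nonempty by blast
  have "0 \<le> c'" if "\<forall>\<psi>. (\<forall>i<n. klinear_fun (\<psi> i)) \<longrightarrow>
        (\<Prod>i<n. sphere_sup N (\<psi> i)) \<le> c' * sphere_sup N (\<lambda>x. \<Prod>i<n. \<psi> i x)" for c'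
  proof -
    have "1 \<le> c' * sphere_sup N (\<lambda>x. \<Prod>i<n. \<phi> x)"
      using that[rule_format, of "\<lambda>_. \<phi>"] \<phi> by (simp add: dual_sphere_def)
    moreover have "0 \<le> sphere_sup N (\<lambda>x. \<Prod>i<n. \<phi> x)"
      using \<phi> by (intro sphere_sup_nonneg sphere_bounded_prod) (simp add: dual_sphere_def)
    ultimately show ?thesis by (smt (verit) mult_nonpos_nonneg)
  qed
  then show "bdd_below {c. \<forall>\<psi>. (\<forall>i<n. klinear_fun (\<psi> i)) \<longrightarrow>
        (\<Prod>i<n. sphere_sup N (\<psi> i)) \<le> c * sphere_sup N (\<lambda>x. \<Prod>i<n. \<psi> i x)}"
    unfolding bdd_below_def by blast
qed

end

section \<open>Minimising the log-integral\<close>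

lemma trunc_log_eq_ln_max:
  assumes "0 \<le> t" shows "trunc_log m t = ln (max t (exp (- real m)))"
proof (cases "t = 0")
  case False
  with assms have "max (ln t) (- real m) = ln (max t (exp (- real m)))"
    by (smt (verit, best) ln_exp ln_ge_iff)
  with False show ?thesis by (simp add: trunc_log_def)
qed (simp add: trunc_log_def max_def)

lemma tendsto_trunc_log:
  assumes "(f \<longlongrightarrow> t) F" "\<And>x. 0 \<le> f x" "0 \<le> t"
  shows "((\<lambda>x. trunc_log m (f x)) \<longlongrightarrow> trunc_log m t) F"
proof -
  have "((\<lambda>x. ln (max (f x) (exp (- real m)))) \<longlongrightarrow> ln (max t (exp (- real m)))) F"
    by (intro tendsto_intros assms) (smt (verit) exp_gt_zero)
  then show ?thesis using assms by (simp add: trunc_log_eq_ln_max)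
qed

lemma abs_trunc_log_le: "0 \<le> t \<Longrightarrow> t \<le> 1 \<Longrightarrow> \<bar>trunc_log m t\<bar> \<le> real m"
  unfolding trunc_log_def by auto

lemma ln_le_trunc_log: "0 < t \<Longrightarrow> ln t \<le> trunc_log m t"
  unfolding trunc_log_def by simp

lemma borel_measurable_trunc_log: "trunc_log m \<in> borel_measurable borel"
  unfolding trunc_log_def by measurable

locale admissible_measure = vec_norm N
  for N :: "'k::{real_normed_field,heine_borel,second_countable_topology} ^ 'n::finite \<Rightarrow> real" +
  fixes K :: "('k^'n) set" and \<mu> :: "('k^'n) measure"
  assumes K_subset: "K \<subseteq> {x. N x \<le> 1}" and sets_\<mu>: "sets \<mu> = sets (restrict_space borel K)"
    and prob: "prob_space \<mu>" and admissible: "admissible N \<mu>"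
begin

definition log_integral :: "('k^'n \<Rightarrow> 'k) \<Rightarrow> real" where
  "log_integral \<psi> = (\<integral>x. ln (norm (\<psi> x)) \<partial>\<mu>)"

lemma space_\<mu>: "space \<mu> = K"
  using sets_eq_imp_space_eq[OF sets_\<mu>] by (simp add: space_restrict_space)

lemma borel_measurable_\<mu>: "f \<in> borel_measurable borel \<Longrightarrow> f \<in> borel_measurable \<mu>"
  by (subst measurable_cong_sets[OF sets_\<mu> refl]) (rule measurable_restrict_space1)

lemma AE_dual_sphere_nonzero: "\<psi> \<in> dual_sphere N \<Longrightarrow> AE x in \<mu>. \<psi> x \<noteq> 0"
  using admissible unfolding admissible_def dual_sphere_def by blast

lemma integrable_ln_dual_sphere: "\<psi> \<in> dual_sphere N \<Longrightarrow> integrable \<mu> (\<lambda>x. ln (norm (\<psi> x)))"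
  using admissible unfolding admissible_def dual_sphere_def by blast

lemma norm_dual_sphere_le_1: "\<psi> \<in> dual_sphere N \<Longrightarrow> x \<in> space \<mu> \<Longrightarrow> norm (\<psi> x) \<le> 1"
  using norm_klinear_le[of \<psi> x] K_subset space_\<mu> N_nonneg[of x]
  by (fastforce simp: dual_sphere_def)

lemma borel_measurable_trunc_log_klinear:
  "klinear_fun \<psi> \<Longrightarrow> (\<lambda>x. trunc_log m (norm (\<psi> x))) \<in> borel_measurable \<mu>"
  by (intro borel_measurable_\<mu> measurable_compose[OF measurable_compose[OF
      borel_measurable_klinear_fun borel_measurable_norm] borel_measurable_trunc_log])

lemma integrable_trunc_log:
  assumes "\<psi> \<in> dual_sphere N" shows "integrable \<mu> (\<lambda>x. trunc_log m (norm (\<psi> x)))"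
proof (rule finite_measure.integrable_const_bound[where B="real m"])
  show "finite_measure \<mu>" using prob by (rule prob_space.finite_measure)
  show "AE x in \<mu>. norm (trunc_log m (norm (\<psi> x))) \<le> real m"
    using assms by (intro AE_I2) (simp add: abs_trunc_log_le norm_dual_sphere_le_1)
  show "(\<lambda>x. trunc_log m (norm (\<psi> x))) \<in> borel_measurable \<mu>"
    using assms by (intro borel_measurable_trunc_log_klinear) (simp add: dual_sphere_def)
qed

lemma tendsto_trunc_log_integral:
  assumes "a \<longlonglongrightarrow> l" and "\<And>k. lin_functional (a k) \<in> dual_sphere N"
  shows "(\<lambda>k. \<integral>x. trunc_log m (norm (lin_functional (a k) x)) \<partial>\<mu>)
           \<longlonglongrightarrow> (\<integral>x. trunc_log m (norm (lin_functional l x)) \<partial>\<mu>)"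
proof (rule integral_dominated_convergence[where w="\<lambda>_. real m"])
  show "integrable \<mu> (\<lambda>_. real m)"
    using prob by (intro finite_measure.integrable_const prob_space.finite_measure)
  show "AE x in \<mu>. norm (trunc_log m (norm (lin_functional (a k) x))) \<le> real m" for k
    using assms(2) by (intro AE_I2) (simp add: abs_trunc_log_le norm_dual_sphere_le_1)
  show "AE x in \<mu>. (\<lambda>k. trunc_log m (norm (lin_functional (a k) x)))
                     \<longlonglongrightarrow> trunc_log m (norm (lin_functional l x))"
    using assms(1) by (intro AE_I2 tendsto_trunc_log tendsto_norm tendsto_lin_functional) auto
qed (simp_all add: borel_measurable_trunc_log_klinear klinear_fun_lin_functional)

text \<open>Lower semicontinuity of the log-integral: the truncated integrals are continuous
  by dominated convergence and, by admissibility, approximate it uniformly from above.\<close>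

lemma closed_log_integral_sublevel:
  "closed {a \<in> {a. lin_functional a \<in> dual_sphere N}. log_integral (lin_functional a) \<le> t}"
  unfolding closed_sequential_limits
proof (intro allI impI, elim conjE)
  fix a l
  assume a: "\<forall>k. a k \<in> {a \<in> {a. lin_functional a \<in> dual_sphere N}. log_integral (lin_functional a) \<le> t}"
    and lim: "a \<longlonglongrightarrow> l"
  have l: "lin_functional l \<in> dual_sphere N"
    using compact_dual_sphere_coeffs[THEN compact_imp_closed] a lim
    unfolding closed_sequential_limits by blast
  have "log_integral (lin_functional l) \<le> t + \<epsilon>" if "\<epsilon> > 0" for \<epsilon>
  proof -
    obtain M where "\<forall>m\<ge>M. \<forall>\<psi>. klinear_fun \<psi> \<and> sphere_sup N \<psi> = 1 \<longrightarrow>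
        \<bar>(\<integral>x. trunc_log m (norm (\<psi> x)) \<partial>\<mu>) - (\<integral>x. ln (norm (\<psi> x)) \<partial>\<mu>)\<bar> < \<epsilon>"
      using admissible \<open>\<epsilon> > 0\<close> unfolding admissible_def by blast
    then have M: "\<bar>(\<integral>x. trunc_log M (norm (\<psi> x)) \<partial>\<mu>) - log_integral \<psi>\<bar> < \<epsilon>"
      if "\<psi> \<in> dual_sphere N" for \<psi>
      using that by (simp add: dual_sphere_def log_integral_def)
    have "(\<integral>x. trunc_log M (norm (lin_functional (a k) x)) \<partial>\<mu>) \<le> t + \<epsilon>" for k
    proof -
      have "lin_functional (a k) \<in> dual_sphere N" "log_integral (lin_functional (a k)) \<le> t"
        using a by auto
      then show ?thesis using M[of "lin_functional (a k)"] by linarith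
    qed
    then have "(\<integral>x. trunc_log M (norm (lin_functional l x)) \<partial>\<mu>) \<le> t + \<epsilon>"
      using a lim by (intro LIMSEQ_le_const2[OF tendsto_trunc_log_integral]) auto
    moreover have "AE x in \<mu>. ln (norm (lin_functional l x)) \<le> trunc_log M (norm (lin_functional l x))"
      using AE_dual_sphere_nonzero[OF l] by eventually_elim (simp add: ln_le_trunc_log)
    then have "log_integral (lin_functional l) \<le> (\<integral>x. trunc_log M (norm (lin_functional l x)) \<partial>\<mu>)"
      unfolding log_integral_def
      by (intro integral_mono_AE integrable_ln_dual_sphere integrable_trunc_log l)
    ultimately show ?thesis by linarith
  qed
  then show "l \<in> {a \<in> {a. lin_functional a \<in> dual_sphere N}. log_integral (lin_functional a) \<le> t}"
    using l field_le_epsilon by blast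
qed

lemma coeffs_of_dual_sphere: "\<phi> \<in> dual_sphere N \<Longrightarrow> \<exists>a. \<phi> = lin_functional a"
  unfolding dual_sphere_def using klinear_fun_eq_lin_functional by blast

lemma log_integral_attains_min: "\<exists>\<psi>\<^sub>0\<in>dual_sphere N. \<forall>\<phi>\<in>dual_sphere N. log_integral \<psi>\<^sub>0 \<le> log_integral \<phi>"
proof -
  have "{a. lin_functional a \<in> dual_sphere N} \<noteq> {}"
    using dual_sphere_nonempty coeffs_of_dual_sphere by blast
  then obtain a\<^sub>0 where "lin_functional a\<^sub>0 \<in> dual_sphere N"
    and "\<And>a. lin_functional a \<in> dual_sphere N \<Longrightarrow> log_integral (lin_functional a\<^sub>0) \<le> log_integral (lin_functional a)"
    using compact_lower_semicontinuous_attains_min[OF compact_dual_sphere_coeffs _ closed_log_integral_sublevel]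
    by blast
  then show ?thesis by (metis coeffs_of_dual_sphere)
qed

lemma exp_sum_log_integral_le:
  fixes n :: nat
  assumes \<phi>: "\<And>i. i < n \<Longrightarrow> \<phi> i \<in> dual_sphere N"
  shows "exp (\<Sum>i<n. log_integral (\<phi> i)) \<le> sphere_sup N (\<lambda>x. \<Prod>i<n. \<phi> i x)"
proof -
  let ?\<Phi> = "\<lambda>x. \<Prod>i<n. \<phi> i x"
  have lin: "\<And>i. i \<in> {..<n} \<Longrightarrow> klinear_fun (\<phi> i)" using \<phi> by (simp add: dual_sphere_def)
  have "AE x in \<mu>. \<forall>i\<in>{..<n}. \<phi> i x \<noteq> 0"
    using \<phi> by (intro AE_finite_allI) (auto intro: AE_dual_sphere_nonzero)
  then have AE_\<Phi>: "AE x in \<mu>. 0 < norm (?\<Phi> x) \<and> (\<Sum>i<n. ln (norm (\<phi> i x))) = ln (norm (?\<Phi> x)) \<and>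
      norm (?\<Phi> x) \<le> sphere_sup N ?\<Phi>"
    using AE_space
  proof eventually_elim
    case (elim x)
    then have "norm (?\<Phi> x) \<le> sphere_sup N ?\<Phi> * N x ^ n"
      using norm_prod_klinear_le[of "{..<n}" \<phi> x] lin by simp
    also have "\<dots> \<le> sphere_sup N ?\<Phi>"
      using elim K_subset N_nonneg[of x] space_\<mu>
        sphere_sup_nonneg[OF sphere_bounded_prod[of "{..<n}" \<phi>, OF lin]]
      by (auto intro!: mult_left_le power_le_one)
    finally have "norm (?\<Phi> x) \<le> sphere_sup N ?\<Phi>" .
    moreover have "ln (norm (?\<Phi> x)) = (\<Sum>i<n. ln (norm (\<phi> i x)))"
      unfolding prod_norm[symmetric] using elim by (intro ln_prod) auto
    ultimately show ?case using elim by simp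
  qed
  have pos: "sphere_sup N ?\<Phi> > 0"
  proof -
    have "AE x in \<mu>. 0 < sphere_sup N ?\<Phi>"
      using AE_\<Phi> by eventually_elim (metis order_less_le_trans)
    then show ?thesis using prob_space.AE_const[OF prob] by blast
  qed
  have "(\<Sum>i<n. log_integral (\<phi> i)) = (\<integral>x. (\<Sum>i<n. ln (norm (\<phi> i x))) \<partial>\<mu>)"
    unfolding log_integral_def
    by (rule Bochner_Integration.integral_sum[symmetric]) (simp add: \<phi> integrable_ln_dual_sphere)
  also have "\<dots> \<le> (\<integral>x. ln (sphere_sup N ?\<Phi>) \<partial>\<mu>)"
  proof (rule integral_mono_AE)
    show "integrable \<mu> (\<lambda>x. \<Sum>i<n. ln (norm (\<phi> i x)))"
      by (intro Bochner_Integration.integrable_sum integrable_ln_dual_sphere \<phi>) simp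
    show "integrable \<mu> (\<lambda>x. ln (sphere_sup N ?\<Phi>))"
      using prob by (intro finite_measure.integrable_const prob_space.finite_measure)
    show "AE x in \<mu>. (\<Sum>i<n. ln (norm (\<phi> i x))) \<le> ln (sphere_sup N ?\<Phi>)"
      using AE_\<Phi> by eventually_elim (metis ln_mono)
  qed
  also have "\<dots> = ln (sphere_sup N ?\<Phi>)"
    using prob by (simp add: prob_space.prob_space)
  finally show ?thesis using pos by (metis exp_le_cancel_iff exp_ln)
qed

lemma prod_sphere_sup_le:
  assumes min: "\<And>\<phi>. \<phi> \<in> dual_sphere N \<Longrightarrow> log_integral \<psi>\<^sub>0 \<le> log_integral \<phi>"
    and lin: "\<And>i. i < n \<Longrightarrow> klinear_fun (\<psi> i)"
  shows "(\<Prod>i<n. sphere_sup N (\<psi> i)) \<le> exp (- real n * log_integral \<psi>\<^sub>0) * sphere_sup N (\<lambda>x. \<Prod>i<n. \<psi> i x)"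
proof (cases "\<exists>i<n. sphere_sup N (\<psi> i) = 0")
  case True
  then have "(\<Prod>i<n. sphere_sup N (\<psi> i)) = 0"
    by (metis finite_lessThan lessThan_iff prod_zero_iff)
  moreover have "0 \<le> sphere_sup N (\<lambda>x. \<Prod>i<n. \<psi> i x)"
    using lin by (intro sphere_sup_nonneg sphere_bounded_prod) simp
  ultimately show ?thesis by (metis exp_ge_zero mult_nonneg_nonneg)
next
  case False
  define s where "s i = sphere_sup N (\<psi> i)" for i
  have s_pos: "s i > 0" if "i < n" for i
    using False sphere_sup_nonneg[OF sphere_bounded_klinear_fun[OF lin[OF that]]] that
    unfolding s_def by force
  define \<phi> where "\<phi> i x = \<psi> i x / of_real (s i)" for i x
  have \<phi>: "\<phi> i \<in> dual_sphere N" if "i < n" for i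
    using divide_sphere_sup_in_dual_sphere[OF lin[OF that]] s_pos[OF that]
    by (simp add: \<phi>_def[abs_def] s_def)
  have prod_s_pos: "(\<Prod>i<n. s i) > 0" using s_pos by (intro prod_pos) auto
  have "exp (real n * log_integral \<psi>\<^sub>0) \<le> exp (\<Sum>i<n. log_integral (\<phi> i))"
    using min \<phi> sum_mono[of "{..<n}" "\<lambda>_. log_integral \<psi>\<^sub>0" "\<lambda>i. log_integral (\<phi> i)"] by simp
  also have "\<dots> \<le> sphere_sup N (\<lambda>x. \<Prod>i<n. \<phi> i x)"
    by (rule exp_sum_log_integral_le) (use \<phi> in auto)
  also have "\<dots> = sphere_sup N (\<lambda>x. (\<Prod>i<n. \<psi> i x) / of_real (\<Prod>i<n. s i))"
    by (simp add: \<phi>_def prod_dividef)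
  also have "\<dots> = sphere_sup N (\<lambda>x. \<Prod>i<n. \<psi> i x) / (\<Prod>i<n. s i)"
    using lin by (intro sphere_sup_divide sphere_bounded_prod prod_s_pos) auto
  finally show ?thesis
    using prod_s_pos by (simp add: s_def exp_minus field_simps)
qed

theorem c_const_le_exp_log_integral:
  "\<exists>\<psi>\<^sub>0. klinear_fun \<psi>\<^sub>0 \<and> sphere_sup N \<psi>\<^sub>0 = 1 \<and>
     (\<forall>n. c_const N n \<le> exp (- real n * log_integral \<psi>\<^sub>0))"
proof -
  obtain \<psi>\<^sub>0 where \<psi>\<^sub>0: "\<psi>\<^sub>0 \<in> dual_sphere N"
    and min: "\<And>\<phi>. \<phi> \<in> dual_sphere N \<Longrightarrow> log_integral \<psi>\<^sub>0 \<le> log_integral \<phi>"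
    using log_integral_attains_min by blast
  have "c_const N n \<le> exp (- real n * log_integral \<psi>\<^sub>0)" for n
    using prod_sphere_sup_le[OF min] by (intro c_const_le) blast
  with \<psi>\<^sub>0 show ?thesis by (auto simp: dual_sphere_def)
qed

end

lemma c_const_bound_finite_dim:
  fixes N :: "'k::{real_normed_field,heine_borel,second_countable_topology} ^ 'n::finite \<Rightarrow> real"
  assumes "is_norm_on N" "K \<subseteq> {x. N x \<le> 1}" "sets \<mu> = sets (restrict_space borel K)"
    "prob_space \<mu>" "admissible N \<mu>"
  shows "\<exists>\<psi>\<^sub>0. klinear_fun \<psi>\<^sub>0 \<and> sphere_sup N \<psi>\<^sub>0 = 1 \<and>
    (\<forall>n. c_const N n \<le> exp (- real n * (\<integral>x. ln (norm (\<psi>\<^sub>0 x)) \<partial>\<mu>)))"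
proof -
  interpret admissible_measure N K \<mu>
    using assms by (intro admissible_measure.intro vec_norm.intro admissible_measure_axioms.intro)
  show ?thesis using c_const_le_exp_log_integral by (simp add: log_integral_def)
qed

theorem proposition1p6:
  shows
  "(\<forall>(N :: real ^ 'n::finite \<Rightarrow> real) (K :: (real ^ 'n) set) (\<mu> :: (real ^ 'n) measure).
      is_norm_on N \<and> K \<in> sets borel \<and> K \<subseteq> {x. N x \<le> 1} \<and>
      sets \<mu> = sets (restrict_space borel K) \<and> prob_space \<mu> \<and> admissible N \<mu> \<longrightarrow>
      (\<exists>\<psi>\<^sub>0. klinear_fun \<psi>\<^sub>0 \<and> sphere_sup N \<psi>\<^sub>0 = 1 \<and>
         (\<forall>n::nat. n \<ge> 1 \<longrightarrow>
            c_const N n \<le> exp (- real n * (\<integral>x. ln \<bar>\<psi>\<^sub>0 x\<bar> \<partial>\<mu>)))))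
   \<and>
   (\<forall>(N :: complex ^ 'n::finite \<Rightarrow> real) (K :: (complex ^ 'n) set) (\<mu> :: (complex ^ 'n) measure).
      is_norm_on N \<and> K \<in> sets borel \<and> K \<subseteq> {x. N x \<le> 1} \<and>
      sets \<mu> = sets (restrict_space borel K) \<and> prob_space \<mu> \<and> admissible N \<mu> \<longrightarrow>
      (\<exists>\<psi>\<^sub>0. klinear_fun \<psi>\<^sub>0 \<and> sphere_sup N \<psi>\<^sub>0 = 1 \<and>
         (\<forall>n::nat. n \<ge> 1 \<longrightarrow>
            c_const N n \<le> exp (- real n * (\<integral>x. ln (cmod (\<psi>\<^sub>0 x)) \<partial>\<mu>)))))"
proof (intro conjI allI impI, goal_cases)
  case (1 N K \<mu>)
  then show ?case using c_const_bound_finite_dim[of N K \<mu>] by auto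
next
  case (2 N K \<mu>)
  then show ?case using c_const_bound_finite_dim[of N K \<mu>] by auto
qed

end
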